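(* Assume $a/b>\sqrt2$ and let $u$ satisfy $|u|<u_{\max}$. Then the four vertices $P_1,P_2,P_3,P_4$ of the self-intersected 4-periodic with parameter $u$ and the two foci $f_1=(-c,0)$, $f_2=(c,0)$ lie on the circle with center $$C=\left(0,\ \frac{c^2u^2-a^2+2b^2}{2b\sqrt{1-u^2}}\right)\quad\text{and radius}\quad R=\frac{a^2-c^2u^2}{2b\sqrt{1-u^2}}.$$ Moreover, whenever $a^2+(u^2-2)c^2\neq 0$, the four vertices of the outer polygon and the two foci lie on the circle with center $$C'=\left(0,\ -\frac{2bc^2\sqrt{1-u^2}}{a^2+(u^2-2)c^2}\right)\quad\text{and radius}\quad |R'|,\qquad R'=\frac{c\,(c^2u^2-a^2)}{a^2+(u^2-2)c^2}.$$
   Context: The elliptic billiard is $\mathcal{E}: x^2/a^2+y^2/b^2=1$, $a>b>0$, $c=\sqrt{a^2-b^2}$, foci $f_1=(-c,0)$, $f_2=(c,0)$. For $a/b>\sqrt2$ the self-intersected 4-periodics (closed 4-bounce billiard trajectories tangent to the confocal hyperbola $x^2/a''^2-y^2/b''^2=1$, $a''=a\sqrt{a^2-2b^2}/c$, $b''=b^2/c$) are parametrized by $u$ with $|u|\le u_{\max}:=\frac{a}{c^2}\sqrt{a^2-2b^2}$: $P_1=(au,\,b\sqrt{1-u^2})$, $P_3=(-au,\,b\sqrt{1-u^2})$, $P_2=\left(-\frac{a\sqrt{a^2(a^2-2b^2)-c^4u^2}}{c^2\sqrt{1-u^2}},\,-\frac{b^3}{c^2\sqrt{1-u^2}}\right)$,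 $P_4=\left(\frac{a\sqrt{a^2(a^2-2b^2)-c^4u^2}}{c^2\sqrt{1-u^2}},\,-\frac{b^3}{c^2\sqrt{1-u^2}}\right)$. The outer polygon has vertices $P_i'$, $i=1,\dots,4$, where $P_i'$ is the intersection point of the tangent lines to $\mathcal{E}$ at $P_i$ and at $P_{i+1}$ (indices mod 4). *)

theory Defs
  imports Complex_Main
begin

text \<open>Elliptic billiard x^2/a^2 + y^2/b^2 = 1, a > b > 0, c = sqrt(a^2 - b^2).\<close>

definition foc :: "real \<Rightarrow> real \<Rightarrow> real" where
  "foc a b = sqrt (a\<^sup>2 - b\<^sup>2)"

definition umax :: "real \<Rightarrow> real \<Rightarrow> real" where
  "umax a b = a / (foc a b)\<^sup>2 * sqrt (a\<^sup>2 - 2 * b\<^sup>2)"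

definition P1 :: "real \<Rightarrow> real \<Rightarrow> real \<Rightarrow> real \<times> real" where
  "P1 a b u = (a * u, b * sqrt (1 - u\<^sup>2))"

definition P3 :: "real \<Rightarrow> real \<Rightarrow> real \<Rightarrow> real \<times> real" where
  "P3 a b u = (- a * u, b * sqrt (1 - u\<^sup>2))"

definition P2 :: "real \<Rightarrow> real \<Rightarrow> real \<Rightarrow> real \<times> real" where
  "P2 a b u = (let c = foc a b in
     (- (a * sqrt (a\<^sup>2 * (a\<^sup>2 - 2 * b\<^sup>2) - c^4 * u\<^sup>2)) / (c\<^sup>2 * sqrt (1 - u\<^sup>2)),
      - (b^3) / (c\<^sup>2 * sqrt (1 - u\<^sup>2))))"

definition P4 :: "real \<Rightarrow> real \<Rightarrow> real \<Rightarrow> real \<times> real" where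
  "P4 a b u = (let c = foc a b in
     ((a * sqrt (a\<^sup>2 * (a\<^sup>2 - 2 * b\<^sup>2) - c^4 * u\<^sup>2)) / (c\<^sup>2 * sqrt (1 - u\<^sup>2)),
      - (b^3) / (c\<^sup>2 * sqrt (1 - u\<^sup>2))))"

definition tangent_line :: "real \<Rightarrow> real \<Rightarrow> real \<times> real \<Rightarrow> (real \<times> real) set" where
  "tangent_line a b p = {q. fst q * fst p / a\<^sup>2 + snd q * snd p / b\<^sup>2 = 1}"

definition tangent_meet :: "real \<Rightarrow> real \<Rightarrow> real \<times> real \<Rightarrow> real \<times> real \<Rightarrow> real \<times> real" where
  "tangent_meet a b p q = (THE r. r \<in> tangent_line a b p \<and> r \<in> tangent_line a b q)"

definition P1' :: "real \<Rightarrow> real \<Rightarrow> real \<Rightarrow> real \<times> real" where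
  "P1' a b u = tangent_meet a b (P1 a b u) (P2 a b u)"
definition P2' :: "real \<Rightarrow> real \<Rightarrow> real \<Rightarrow> real \<times> real" where
  "P2' a b u = tangent_meet a b (P2 a b u) (P3 a b u)"
definition P3' :: "real \<Rightarrow> real \<Rightarrow> real \<Rightarrow> real \<times> real" where
  "P3' a b u = tangent_meet a b (P3 a b u) (P4 a b u)"
definition P4' :: "real \<Rightarrow> real \<Rightarrow> real \<Rightarrow> real \<times> real" where
  "P4' a b u = tangent_meet a b (P4 a b u) (P1 a b u)"

definition on_circle :: "real \<times> real \<Rightarrow> real \<Rightarrow> real \<times> real \<Rightarrow> bool" where
  "on_circle C R p \<longleftrightarrow> (fst p - fst C)\<^sup>2 + (snd p - snd C)\<^sup>2 = R\<^sup>2"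

end

theory Submission imports Defs begin

text \<open>Write \<open>s = sqrt (1 - u\<^sup>2)\<close> and \<open>w = sqrt (a\<^sup>2 (a\<^sup>2 - 2 b\<^sup>2) - c\<^sup>4 u\<^sup>2)\<close>. Then
  \<open>P\<^sub>1 = (a u, b s)\<close> and \<open>P\<^sub>2 = (-a w / (c\<^sup>2 s), -b\<^sup>3 / (c\<^sup>2 s))\<close>, and \<open>P\<^sub>3\<close>, \<open>P\<^sub>4\<close> arise
  from \<open>P\<^sub>1\<close>, \<open>P\<^sub>2\<close> by flipping the sign of \<open>u\<close>, resp. \<open>w\<close>, while both circles depend on
  \<open>u\<close> only through \<open>u\<^sup>2\<close> and \<open>s\<close>. It therefore suffices to treat one pair of consecutive
  vertices knowing only \<open>s\<^sup>2 = 1 - u\<^sup>2\<close> and \<open>w\<^sup>2 = c\<^sup>4 s\<^sup>2 - b\<^sup>4\<close>, which survive all sign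
  flips. The meet of the two tangents is then computed by Cramer's rule, and every
  incidence becomes a rational identity modulo these two relations.\<close>

lemma homogeneous_2x2_trivial:
  fixes x y p1 p2 q1 q2 :: "'a::field"
  assumes "x * p1 + y * p2 = 0" and "x * q1 + y * q2 = 0" and "p1 * q2 \<noteq> p2 * q1"
  shows "x = 0 \<and> y = 0"
proof -
  have "x * (p1 * q2 - p2 * q1) = q2 * (x * p1 + y * p2) - p2 * (x * q1 + y * q2)"
    and "y * (p1 * q2 - p2 * q1) = p1 * (x * q1 + y * q2) - q1 * (x * p1 + y * p2)"
    by (simp_all add: algebra_simps)
  then have "x * (p1 * q2 - p2 * q1) = 0" and "y * (p1 * q2 - p2 * q1) = 0"
    using assms(1,2) by simp_all
  with assms(3) show ?thesis by simp
qed

lemma tangent_meet_commute: "tangent_meet a b p q = tangent_meet a b q p"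
  unfolding tangent_meet_def by (simp add: conj_commute)

lemma tangent_meet_eqI:
  assumes "a \<noteq> 0" and "b \<noteq> 0" and "fst p * snd q \<noteq> snd p * fst q"
    and "r \<in> tangent_line a b p" and "r \<in> tangent_line a b q"
  shows "tangent_meet a b p q = r"
  unfolding tangent_meet_def
proof (rule the_equality)
  show "r \<in> tangent_line a b p \<and> r \<in> tangent_line a b q"
    using assms by simp
next
  fix r' assume "r' \<in> tangent_line a b p \<and> r' \<in> tangent_line a b q"
  with assms(4,5) have
    "(fst r' - fst r) / a\<^sup>2 * fst p + (snd r' - snd r) / b\<^sup>2 * snd p = 0"
    "(fst r' - fst r) / a\<^sup>2 * fst q + (snd r' - snd r) / b\<^sup>2 * snd q = 0"
    by (simp_all add: tangent_line_def diff_divide_distrib left_diff_distrib)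
  from homogeneous_2x2_trivial[OF this assms(3)] assms(1,2) show "r' = r"
    by (simp add: prod_eq_iff)
qed

lemma on_circle_abs_iff: "on_circle C \<bar>r\<bar> p \<longleftrightarrow> on_circle C r p"
  by (simp add: on_circle_def)

lemma on_circle_reflect_iff:
  "on_circle (0, y) r (- x, z) \<longleftrightarrow> on_circle (0, y) r (x, z)"
  by (simp add: on_circle_def)

locale billiard_vertex_pair =
  fixes a b c u s w :: real
  assumes a_pos: "a > 0" and b_pos: "b > 0" and c_pos: "c > 0"
    and c_sq: "c\<^sup>2 = a\<^sup>2 - b\<^sup>2" and s_pos: "s > 0" and s_sq: "s\<^sup>2 = 1 - u\<^sup>2"
    and w_sq: "w\<^sup>2 = c^4 * s\<^sup>2 - b^4"
begin

definition upper_vertex :: "real \<times> real" where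
  "upper_vertex = (a * u, b * s)"

definition lower_vertex :: "real \<times> real" where
  "lower_vertex = (- (a * w) / (c\<^sup>2 * s), - (b^3) / (c\<^sup>2 * s))"

definition vertex_circle_center :: "real \<times> real" where
  "vertex_circle_center = (0, (c\<^sup>2 * u\<^sup>2 - a\<^sup>2 + 2 * b\<^sup>2) / (2 * b * s))"

definition vertex_circle_radius :: real where
  "vertex_circle_radius = (a\<^sup>2 - c\<^sup>2 * u\<^sup>2) / (2 * b * s)"

definition outer_circle_center :: "real \<times> real" where
  "outer_circle_center = (0, - (2 * b * c\<^sup>2 * s) / (a\<^sup>2 + (u\<^sup>2 - 2) * c\<^sup>2))"

definition outer_circle_radius :: real where
  "outer_circle_radius = c * (c\<^sup>2 * u\<^sup>2 - a\<^sup>2) / (a\<^sup>2 + (u\<^sup>2 - 2) * c\<^sup>2)"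

lemma upper_vertex_on_vertex_circle:
  "on_circle vertex_circle_center vertex_circle_radius upper_vertex"
proof -
  have "(a * u)\<^sup>2 + (b * s - (c\<^sup>2 * u\<^sup>2 - a\<^sup>2 + 2 * b\<^sup>2) / (2 * b * s))\<^sup>2
      = ((a\<^sup>2 - c\<^sup>2 * u\<^sup>2) / (2 * b * s))\<^sup>2"
    using b_pos s_pos
    apply (simp add: field_simps)
    using s_sq c_sq by algebra
  then show ?thesis
    by (simp add: on_circle_def upper_vertex_def vertex_circle_center_def
        vertex_circle_radius_def)
qed

lemma lower_vertex_on_vertex_circle:
  "on_circle vertex_circle_center vertex_circle_radius lower_vertex"
proof -
  have "(a * w / (c\<^sup>2 * s))\<^sup>2 + (- (b^3) / (c\<^sup>2 * s) - (c\<^sup>2 * u\<^sup>2 - a\<^sup>2 + 2 * b\<^sup>2) / (2 * b * s))\<^sup>2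
      = ((a\<^sup>2 - c\<^sup>2 * u\<^sup>2) / (2 * b * s))\<^sup>2"
    using b_pos s_pos c_pos
    apply (simp add: field_simps)
    using s_sq c_sq w_sq by algebra
  then show ?thesis
    by (simp add: on_circle_def lower_vertex_def vertex_circle_center_def
        vertex_circle_radius_def power2_eq_square)
qed

lemma focus_on_vertex_circle:
  "on_circle vertex_circle_center vertex_circle_radius (c, 0)"
proof -
  have "c\<^sup>2 + ((c\<^sup>2 * u\<^sup>2 - a\<^sup>2 + 2 * b\<^sup>2) / (2 * b * s))\<^sup>2 = ((a\<^sup>2 - c\<^sup>2 * u\<^sup>2) / (2 * b * s))\<^sup>2"
    using b_pos s_pos c_pos
    apply (simp add: field_simps)
    using s_sq c_sq by algebra
  then show ?thesis
    by (simp add: on_circle_def vertex_circle_center_def vertex_circle_radius_def)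
qed

lemma outer_denominator_eq: "a\<^sup>2 + (u\<^sup>2 - 2) * c\<^sup>2 = b\<^sup>2 - c\<^sup>2 * s\<^sup>2"
  using c_sq s_sq by algebra

definition outer_vertex :: "real \<times> real" where
  "outer_vertex = (a * (w * s + b\<^sup>2 * u) / (b\<^sup>2 - c\<^sup>2 * s\<^sup>2),
                   b * (s * (b\<^sup>2 - c\<^sup>2) - u * w) / (b\<^sup>2 - c\<^sup>2 * s\<^sup>2))"

lemma vertices_not_parallel:
  assumes "b\<^sup>2 - c\<^sup>2 * s\<^sup>2 \<noteq> 0"
  shows "fst upper_vertex * snd lower_vertex \<noteq> snd upper_vertex * fst lower_vertex"
proof -
  have "(w * s - b\<^sup>2 * u) * (w * s + b\<^sup>2 * u) = w\<^sup>2 * s\<^sup>2 - b^4 * u\<^sup>2" by algebra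
  also have "\<dots> = (c^4 * s\<^sup>2 - b^4) * s\<^sup>2 - b^4 * (1 - s\<^sup>2)" using w_sq s_sq by simp
  also have "\<dots> = (c\<^sup>2 * s\<^sup>2 - b\<^sup>2) * (c\<^sup>2 * s\<^sup>2 + b\<^sup>2)" by algebra
  moreover have "c\<^sup>2 * s\<^sup>2 + b\<^sup>2 > 0" using b_pos by (simp add: add_nonneg_pos)
  ultimately have "(w * s - b\<^sup>2 * u) * (w * s + b\<^sup>2 * u) \<noteq> 0"
    using assms by simp
  then have "w * s - b\<^sup>2 * u \<noteq> 0" by simp
  then show ?thesis
    using a_pos b_pos c_pos s_pos
    by (simp add: upper_vertex_def lower_vertex_def field_simps power2_eq_square power3_eq_cube)
qed

lemma outer_vertex_on_upper_tangent:
  assumes D: "b\<^sup>2 - c\<^sup>2 * s\<^sup>2 \<noteq> 0"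
  shows "outer_vertex \<in> tangent_line a b upper_vertex"
proof -
  have "a * (w * s + b\<^sup>2 * u) / (b\<^sup>2 - c\<^sup>2 * s\<^sup>2) * (a * u) / a\<^sup>2
      + b * (s * (b\<^sup>2 - c\<^sup>2) - u * w) / (b\<^sup>2 - c\<^sup>2 * s\<^sup>2) * (b * s) / b\<^sup>2
      = (b\<^sup>2 * (u\<^sup>2 + s\<^sup>2) - c\<^sup>2 * s\<^sup>2) / (b\<^sup>2 - c\<^sup>2 * s\<^sup>2)"
    using a_pos b_pos D by (simp add: divide_simps) (simp add: algebra_simps power2_eq_square)
  also have "\<dots> = 1" using s_sq D by simp
  finally show ?thesis
    by (simp add: tangent_line_def outer_vertex_def upper_vertex_def)
qed

lemma outer_vertex_on_lower_tangent:
  assumes D: "b\<^sup>2 - c\<^sup>2 * s\<^sup>2 \<noteq> 0"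
  shows "outer_vertex \<in> tangent_line a b lower_vertex"
proof -
  define D where "D = b\<^sup>2 - c\<^sup>2 * s\<^sup>2"
  have D0: "D \<noteq> 0" using assms D_def by simp
  have "a * (w * s + b\<^sup>2 * u) / D * (- (a * w) / (c\<^sup>2 * s)) / a\<^sup>2
      + b * (s * (b\<^sup>2 - c\<^sup>2) - u * w) / D * (- (b^3) / (c\<^sup>2 * s)) / b\<^sup>2
      = - (w\<^sup>2 * s + b^4 * s - b\<^sup>2 * c\<^sup>2 * s) / (D * c\<^sup>2 * s)"
    using a_pos b_pos c_pos s_pos D0
    by (simp add: field_simps power2_eq_square power3_eq_cube power4_eq_xxxx)
  also have "w\<^sup>2 * s + b^4 * s - b\<^sup>2 * c\<^sup>2 * s = - D * c\<^sup>2 * s"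
    unfolding w_sq D_def by algebra
  also have "- (- D * c\<^sup>2 * s) / (D * c\<^sup>2 * s) = 1"
    using D0 c_pos s_pos by simp
  finally show ?thesis
    by (simp add: tangent_line_def outer_vertex_def lower_vertex_def D_def)
qed

lemma tangent_meet_vertices:
  "b\<^sup>2 - c\<^sup>2 * s\<^sup>2 \<noteq> 0 \<Longrightarrow> tangent_meet a b upper_vertex lower_vertex = outer_vertex"
  using a_pos b_pos
  by (intro tangent_meet_eqI vertices_not_parallel outer_vertex_on_upper_tangent
      outer_vertex_on_lower_tangent) auto

lemma outer_vertex_on_outer_circle:
  assumes "b\<^sup>2 - c\<^sup>2 * s\<^sup>2 \<noteq> 0"
  shows "on_circle outer_circle_center outer_circle_radius outer_vertex"
proof -
  define D where "D = b\<^sup>2 - c\<^sup>2 * s\<^sup>2"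
  have D0: "D \<noteq> 0" using assms D_def by simp
  have ab: "a\<^sup>2 = b\<^sup>2 + c\<^sup>2" using c_sq by simp
  have y: "b * (s * (b\<^sup>2 - c\<^sup>2) - u * w) / D - - (2 * b * c\<^sup>2 * s) / D = b * (s * a\<^sup>2 - u * w) / D"
    using D0 by (simp add: field_simps ab)
  have "a\<^sup>2 * (w * s + b\<^sup>2 * u)\<^sup>2 + b\<^sup>2 * (s * a\<^sup>2 - u * w)\<^sup>2
      = (a\<^sup>2 * s\<^sup>2 + b\<^sup>2 * u\<^sup>2) * (w\<^sup>2 + a\<^sup>2 * b\<^sup>2)"
    by algebra
  also have "a\<^sup>2 * s\<^sup>2 + b\<^sup>2 * u\<^sup>2 = a\<^sup>2 - c\<^sup>2 * u\<^sup>2"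
    using s_sq c_sq by algebra
  also have "w\<^sup>2 + a\<^sup>2 * b\<^sup>2 = c\<^sup>2 * (a\<^sup>2 - c\<^sup>2 * u\<^sup>2)"
    unfolding w_sq s_sq ab by (simp add: algebra_simps power2_eq_square power4_eq_xxxx)
  finally have num: "a\<^sup>2 * (w * s + b\<^sup>2 * u)\<^sup>2 + b\<^sup>2 * (s * a\<^sup>2 - u * w)\<^sup>2
      = c\<^sup>2 * (a\<^sup>2 - c\<^sup>2 * u\<^sup>2)\<^sup>2"
    by (simp add: power2_eq_square)
  have "(a * (w * s + b\<^sup>2 * u) / D)\<^sup>2 + (b * (s * a\<^sup>2 - u * w) / D)\<^sup>2
      = (a\<^sup>2 * (w * s + b\<^sup>2 * u)\<^sup>2 + b\<^sup>2 * (s * a\<^sup>2 - u * w)\<^sup>2) / D\<^sup>2"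
    using D0 by (simp add: field_simps power2_eq_square)
  also have "\<dots> = (c * (c\<^sup>2 * u\<^sup>2 - a\<^sup>2) / D)\<^sup>2"
    unfolding num by (simp add: power2_eq_square field_simps)
  finally have "(a * (w * s + b\<^sup>2 * u) / D)\<^sup>2 + (b * (s * a\<^sup>2 - u * w) / D)\<^sup>2
      = (c * (c\<^sup>2 * u\<^sup>2 - a\<^sup>2) / D)\<^sup>2" .
  with y show ?thesis
    by (simp add: on_circle_def outer_vertex_def outer_circle_center_def
        outer_circle_radius_def outer_denominator_eq D_def)
qed

lemma tangent_meet_on_outer_circle:
  "a\<^sup>2 + (u\<^sup>2 - 2) * c\<^sup>2 \<noteq> 0 \<Longrightarrow>
    on_circle outer_circle_center outer_circle_radius (tangent_meet a b upper_vertex lower_vertex)"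
  unfolding outer_denominator_eq
  by (simp add: tangent_meet_vertices outer_vertex_on_outer_circle)

lemma focus_on_outer_circle:
  assumes "a\<^sup>2 + (u\<^sup>2 - 2) * c\<^sup>2 \<noteq> 0"
  shows "on_circle outer_circle_center outer_circle_radius (c, 0)"
proof -
  have "c\<^sup>2 + (- (2 * b * c\<^sup>2 * s) / (b\<^sup>2 - c\<^sup>2 * s\<^sup>2))\<^sup>2
      = (c * (c\<^sup>2 * u\<^sup>2 - a\<^sup>2) / (b\<^sup>2 - c\<^sup>2 * s\<^sup>2))\<^sup>2"
    using assms b_pos s_pos c_pos
    unfolding outer_denominator_eq
    apply (simp add: field_simps)
    using s_sq c_sq by algebra
  then show ?thesis
    by (simp add: on_circle_def outer_circle_center_def outer_circle_radius_def
        outer_denominator_eq)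
qed

end

lemma foc_sq: "b \<le> a \<Longrightarrow> 0 \<le> b \<Longrightarrow> (foc a b)\<^sup>2 = a\<^sup>2 - b\<^sup>2"
  by (simp add: foc_def power_mono)

lemma foc_pos: "0 \<le> b \<Longrightarrow> b < a \<Longrightarrow> foc a b > 0"
  by (simp add: foc_def power_strict_mono)

lemma abs_less_umax_bounds:
  assumes "0 < b" and "b < a" and "sqrt 2 < a / b" and "\<bar>u\<bar> < umax a b"
  shows "(foc a b)^4 * u\<^sup>2 < a\<^sup>2 * (a\<^sup>2 - 2 * b\<^sup>2)" and "u\<^sup>2 < 1"
proof -
  define c where "c = foc a b"
  have c: "c > 0" and cc: "c\<^sup>2 = a\<^sup>2 - b\<^sup>2"
    using assms foc_pos foc_sq unfolding c_def by auto
  have "(sqrt 2 * b)\<^sup>2 < a\<^sup>2"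
    using assms by (intro power_strict_mono) (auto simp: field_simps)
  then have "a\<^sup>2 - 2 * b\<^sup>2 > 0" by (simp add: power_mult_distrib)
  moreover have "\<bar>u\<bar>\<^sup>2 < (a / c\<^sup>2 * sqrt (a\<^sup>2 - 2 * b\<^sup>2))\<^sup>2"
    using assms(4) unfolding umax_def c_def by (intro power_strict_mono) auto
  ultimately show radicand: "c^4 * u\<^sup>2 < a\<^sup>2 * (a\<^sup>2 - 2 * b\<^sup>2)"
    using c by (simp add: power_mult_distrib power_divide field_simps)
  have "a\<^sup>2 = c\<^sup>2 + b\<^sup>2" using cc by simp
  then have "a\<^sup>2 * (a\<^sup>2 - 2 * b\<^sup>2) = c^4 - b^4"
    by (simp add: algebra_simps power2_eq_square power4_eq_xxxx)
  with radicand assms(1) have "c^4 * u\<^sup>2 < c^4 * 1"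
    by (smt (verit) zero_less_power)
  then show "u\<^sup>2 < 1" using c by simp
qed

lemma billiard_vertex_pairI:
  assumes "0 < b" and "b < a" and "sqrt 2 < a / b" and "\<bar>u\<bar> < umax a b"
    and "u'\<^sup>2 = u\<^sup>2" and "w\<^sup>2 = a\<^sup>2 * (a\<^sup>2 - 2 * b\<^sup>2) - (foc a b)^4 * u\<^sup>2"
  shows "billiard_vertex_pair a b (foc a b) u' (sqrt (1 - u\<^sup>2)) w"
proof -
  have c: "foc a b > 0" and cc: "(foc a b)\<^sup>2 = a\<^sup>2 - b\<^sup>2"
    using assms(1,2) foc_pos foc_sq by auto
  have u: "u\<^sup>2 < 1" using abs_less_umax_bounds[OF assms(1-4)] by simp
  then have "(sqrt (1 - u\<^sup>2))\<^sup>2 = 1 - u\<^sup>2" by simp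
  with assms(6) cc have "w\<^sup>2 = (foc a b)^4 * (sqrt (1 - u\<^sup>2))\<^sup>2 - b^4" by algebra
  with assms(1,2,5) c cc u show ?thesis
    by unfold_locales auto
qed

theorem mainTheorem3:
  fixes a b u :: real
  defines "c \<equiv> foc a b"
  assumes "a > b" and "b > 0" and "a / b > sqrt 2" and "\<bar>u\<bar> < umax a b"
  shows "(let C = (0, (c\<^sup>2 * u\<^sup>2 - a\<^sup>2 + 2 * b\<^sup>2) / (2 * b * sqrt (1 - u\<^sup>2)));
              R = (a\<^sup>2 - c\<^sup>2 * u\<^sup>2) / (2 * b * sqrt (1 - u\<^sup>2))
          in on_circle C R (P1 a b u) \<and> on_circle C R (P2 a b u) \<and>
             on_circle C R (P3 a b u) \<and> on_circle C R (P4 a b u) \<and>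
             on_circle C R (- c, 0) \<and> on_circle C R (c, 0))
       \<and> (a\<^sup>2 + (u\<^sup>2 - 2) * c\<^sup>2 \<noteq> 0 \<longrightarrow>
          (let C' = (0, - (2 * b * c\<^sup>2 * sqrt (1 - u\<^sup>2)) / (a\<^sup>2 + (u\<^sup>2 - 2) * c\<^sup>2));
               R' = c * (c\<^sup>2 * u\<^sup>2 - a\<^sup>2) / (a\<^sup>2 + (u\<^sup>2 - 2) * c\<^sup>2)
           in on_circle C' \<bar>R'\<bar> (P1' a b u) \<and> on_circle C' \<bar>R'\<bar> (P2' a b u) \<and>
              on_circle C' \<bar>R'\<bar> (P3' a b u) \<and> on_circle C' \<bar>R'\<bar> (P4' a b u) \<and>
              on_circle C' \<bar>R'\<bar> (- c, 0) \<and> on_circle C' \<bar>R'\<bar> (c, 0)))"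
proof -
  define s where "s = sqrt (1 - u\<^sup>2)"
  define w where "w = sqrt (a\<^sup>2 * (a\<^sup>2 - 2 * b\<^sup>2) - c^4 * u\<^sup>2)"
  have "w\<^sup>2 = a\<^sup>2 * (a\<^sup>2 - 2 * b\<^sup>2) - c^4 * u\<^sup>2"
    using abs_less_umax_bounds[OF assms(3,2,4,5)] unfolding w_def c_def by simp
  then interpret p: billiard_vertex_pair a b c u s w
    + q: billiard_vertex_pair a b c "- u" s w
    + r: billiard_vertex_pair a b c u s "- w"
    + t: billiard_vertex_pair a b c "- u" s "- w"
    using assms(2-5) unfolding s_def c_def by (auto intro: billiard_vertex_pairI)
  have vertices: "P1 a b u = p.upper_vertex" "P2 a b u = p.lower_vertex"
      "P3 a b u = q.upper_vertex" "P4 a b u = r.lower_vertex"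
    by (simp_all add: P1_def P2_def P3_def P4_def p.upper_vertex_def p.lower_vertex_def
        q.upper_vertex_def r.lower_vertex_def Let_def c_def[symmetric] s_def[symmetric]
        w_def[symmetric])
  have outer: "P1' a b u = tangent_meet a b p.upper_vertex p.lower_vertex"
      "P2' a b u = tangent_meet a b q.upper_vertex q.lower_vertex"
      "P3' a b u = tangent_meet a b t.upper_vertex t.lower_vertex"
      "P4' a b u = tangent_meet a b r.upper_vertex r.lower_vertex"
    by (simp_all add: P1'_def P2'_def P3'_def P4'_def vertices tangent_meet_commute
        p.upper_vertex_def q.lower_vertex_def r.upper_vertex_def t.upper_vertex_def
        t.lower_vertex_def)
  show ?thesis
    using p.upper_vertex_on_vertex_circle p.lower_vertex_on_vertex_circle
      q.upper_vertex_on_vertex_circle r.lower_vertex_on_vertex_circle p.focus_on_vertex_circle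
      p.tangent_meet_on_outer_circle q.tangent_meet_on_outer_circle
      r.tangent_meet_on_outer_circle t.tangent_meet_on_outer_circle p.focus_on_outer_circle
    unfolding vertices outer Let_def s_def[symmetric] on_circle_abs_iff on_circle_reflect_iff
      p.vertex_circle_center_def q.vertex_circle_center_def r.vertex_circle_center_def
      p.vertex_circle_radius_def q.vertex_circle_radius_def r.vertex_circle_radius_def
      p.outer_circle_center_def q.outer_circle_center_def r.outer_circle_center_def
      t.outer_circle_center_def p.outer_circle_radius_def q.outer_circle_radius_def
      r.outer_circle_radius_def t.outer_circle_radius_def
    by simp
qed

end
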